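(* Let $s>0$, $\mu\in\mathbb{R}$, $\tilde\varepsilon=s\varepsilon$, $\tilde\delta=s\delta$, and let $\varphi\in H^1_2((0,R))$, smooth on $(0,R)$, satisfy on $(0,R)$ $$-\partial_z\Big(\Big(\frac{4\tilde\varepsilon}{3}+\tilde\delta+\gamma P_0\Big)\frac{\partial_z\varphi}{z^2}\Big)+4\frac{\partial_zP_0}{z^3}\varphi=\frac{\mu\varrho_0}{z^2}\varphi.$$ Then there is $C>0$ such that $|\varphi(z)|\le Cz^3$ and $|\varphi'(z)|\le Cz^2$ for all $z$ near $0$.
   Context: Fix constants $\varepsilon>0$, $\delta>0$, $K>0$ and $6/5<\gamma<4/3$. Let $\varrho_0:[0,R]\to[0,\infty)$ be a Lane–Emden stationary density of radius $R>0$: $\varrho_0$ is smooth and positive on $[0,R)$, $\varrho_0(R)=0$, $P_0:=K\varrho_0^\gamma$ satisfies $\partial_z P_0(z)=-\frac{4\pi\varrho_0(z)}{z^2}\int_0^z\varrho_0(y)y^2\,dy$, and $\varrho_0(z)$ is comparable to $(R-z)^{1/(\gamma-1)}$ for $z$ near $R$. $H^1_2((0,R))$ is the completion of $\{u\in C^\infty([0,R]):u(0)=0\}$ in the norm $\|u\|^2=\int_0^R\frac{|u'|^2+|u|^2}{z^2}dz$. *)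

theory Defs
  imports "HOL-Analysis.Analysis"
begin

text \<open>f is C-infinity on S: all iterated derivatives exist on S (one-sided at boundary
points of S, since derivatives are taken within S).\<close>
definition smooth_on :: "real set \<Rightarrow> (real \<Rightarrow> real) \<Rightarrow> bool" where
  "smooth_on S f \<longleftrightarrow>
     (\<forall>n. \<forall>x\<in>S. (((deriv ^^ n) f) has_real_derivative ((deriv ^^ (Suc n)) f x)) (at x within S))"

definition H12_dist2 :: "real \<Rightarrow> (real \<Rightarrow> real) \<Rightarrow> (real \<Rightarrow> real) \<Rightarrow> real" where
  "H12_dist2 R u v = (LINT z:{0<..<R}|lborel.
      ((deriv u z - deriv v z)\<^sup>2 + (u z - v z)\<^sup>2) / z\<^sup>2)"

text \<open>Membership of a function (smooth on (0,R)) in H^1_2((0,R)), the completion of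
{u in C^infty([0,R]) : u(0) = 0} in the norm int_0^R (|u'|^2+|u|^2)/z^2 dz:
phi has finite norm and is a norm-limit of such smooth functions.\<close>
definition in_H12 :: "real \<Rightarrow> (real \<Rightarrow> real) \<Rightarrow> bool" where
  "in_H12 R \<phi> \<longleftrightarrow>
     set_integrable lborel {0<..<R} (\<lambda>z. ((deriv \<phi> z)\<^sup>2 + (\<phi> z)\<^sup>2) / z\<^sup>2) \<and>
     (\<exists>u :: nat \<Rightarrow> real \<Rightarrow> real.
        (\<forall>n. smooth_on {0..R} (u n) \<and> u n 0 = 0 \<and>
             set_integrable lborel {0<..<R}
               (\<lambda>z. ((deriv \<phi> z - deriv (u n) z)\<^sup>2 + (\<phi> z - u n z)\<^sup>2) / z\<^sup>2)) \<and>
        (\<lambda>n. H12_dist2 R \<phi> (u n)) \<longlonglongrightarrow> 0)"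

definition lane_emden :: "real \<Rightarrow> real \<Rightarrow> real \<Rightarrow> (real \<Rightarrow> real) \<Rightarrow> bool" where
  "lane_emden K \<gamma> R \<rho> \<longleftrightarrow>
     R > 0 \<and> smooth_on {0..<R} \<rho> \<and> (\<forall>z\<in>{0..<R}. \<rho> z > 0) \<and> \<rho> R = 0 \<and>
     (\<forall>z\<in>{0<..<R}. ((\<lambda>y. K * \<rho> y powr \<gamma>) has_real_derivative
         (- 4 * pi * \<rho> z / z\<^sup>2 * integral {0..z} (\<lambda>y. \<rho> y * y\<^sup>2))) (at z)) \<and>
     (\<exists>c1>0. \<exists>c2>0. \<exists>\<eta>>0. \<forall>z. R - \<eta> < z \<and> z < R \<longrightarrow>
         c1 * (R - z) powr (1 / (\<gamma> - 1)) \<le> \<rho> z \<and> \<rho> z \<le> c2 * (R - z) powr (1 / (\<gamma> - 1)))"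

end

theory Submission
  imports Defs
begin

(* Write P = K rho0^gamma, A = 4 s eps/3 + s delta + gamma P (so A >= s(4 eps/3 + delta) > 0)
   and w = A phi' / z^2 (the "flux").  The equation says w' = (4 P'/z^3 - mu rho0/z^2) phi.
   The proof is a bootstrap in three steps:
   (1) membership in H^1_2 alone gives |phi z| <= B z^(3/2): phi'^2/z^2 integrable plus
       Cauchy-Schwarz bounds the increments of phi, and phi^2/z^2 integrable forces phi to
       get arbitrarily small near 0;
   (2) the Lane-Emden equation gives |P'(z)| <= 4 pi M^2 z, so the coefficient of phi in the
       equation is O(1/z^2) and hence |w'| = O(z^(-1/2)), which is integrable: w is bounded;
   (3) then |phi'| = |w| z^2 / A <= C z^2, and integrating from a point where phi is small
       gives |phi| <= C z^3.
   The file first proves the calculus tools, then step (1), the abstract bootstrap (2)-(3)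
   for a flux equation, the Lane-Emden estimate, and finally assembles the theorem. *)

lemma abs_increment_le_majorant:
  fixes f F f' F' :: "real \<Rightarrow> real"
  assumes ab: "a \<le> b"
    and df: "\<And>y. a \<le> y \<Longrightarrow> y \<le> b \<Longrightarrow> (f has_real_derivative f' y) (at y)"
    and dF: "\<And>y. a \<le> y \<Longrightarrow> y \<le> b \<Longrightarrow> (F has_real_derivative F' y) (at y)"
    and le: "\<And>y. a \<le> y \<Longrightarrow> y \<le> b \<Longrightarrow> \<bar>f' y\<bar> \<le> F' y"
  shows "\<bar>f b - f a\<bar> \<le> F b - F a"
proof -
  have c1: "continuous_on {a..b} (\<lambda>y. F y - f y)"
    by (rule DERIV_atLeastAtMost_imp_continuous_on) (use df dF in \<open>blast intro: DERIV_diff\<close>)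
  have c2: "continuous_on {a..b} (\<lambda>y. F y + f y)"
    by (rule DERIV_atLeastAtMost_imp_continuous_on) (use df dF in \<open>blast intro: DERIV_add\<close>)
  have "F a - f a \<le> F b - f b"
  proof (rule DERIV_nonneg_imp_increasing_open[OF ab _ c1])
    fix x assume "a < x" "x < b"
    then show "\<exists>y. ((\<lambda>y. F y - f y) has_real_derivative y) (at x) \<and> 0 \<le> y"
      using DERIV_diff[OF dF df, of x] le[of x] by (intro exI[of _ "F' x - f' x"]) auto
  qed
  moreover have "F a + f a \<le> F b + f b"
  proof (rule DERIV_nonneg_imp_increasing_open[OF ab _ c2])
    fix x assume "a < x" "x < b"
    then show "\<exists>y. ((\<lambda>y. F y + f y) has_real_derivative y) (at x) \<and> 0 \<le> y"
      using DERIV_add[OF dF df, of x] le[of x] by (intro exI[of _ "F' x + f' x"]) auto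
  qed
  ultimately show ?thesis by linarith
qed

lemma abs_le_of_small_values:
  fixes f :: "real \<Rightarrow> real"
  assumes "\<And>e. e > 0 \<Longrightarrow> \<exists>x. \<bar>f x\<bar> \<le> e \<and> \<bar>f z - f x\<bar> \<le> F"
  shows "\<bar>f z\<bar> \<le> F"
proof (rule field_le_epsilon)
  fix e :: real assume "e > 0"
  then obtain x where "\<bar>f x\<bar> \<le> e" "\<bar>f z - f x\<bar> \<le> F" using assms by blast
  then show "\<bar>f z\<bar> \<le> F + e" by linarith
qed

text \<open>Weighted AM-GM inequality |a| <= a^2/(2 t y^2) + t y^2 / 2, the pointwise form of the
  Cauchy-Schwarz estimate used for the increments of an H^1_2 function.\<close>
lemma abs_le_weighted_amgm:
  fixes a y t :: real
  assumes "y > 0" "t > 0"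
  shows "\<bar>a\<bar> \<le> (a\<^sup>2 / y\<^sup>2) / (2*t) + t * y\<^sup>2 / 2"
proof -
  have "0 \<le> (\<bar>a\<bar> - t*y\<^sup>2)\<^sup>2" by simp
  hence "2*t*y\<^sup>2*\<bar>a\<bar> \<le> a\<^sup>2 + (t * y\<^sup>2)\<^sup>2" by (simp add: power2_eq_square algebra_simps)
  hence "\<bar>a\<bar> \<le> (a\<^sup>2 + (t * y\<^sup>2)\<^sup>2) / (2*t*y\<^sup>2)" using assms by (simp add: field_simps)
  also have "\<dots> = (a\<^sup>2 / y\<^sup>2) / (2*t) + t * y\<^sup>2 / 2" using assms by (simp add: field_simps power2_eq_square)
  finally show ?thesis .
qed

lemma smooth_on_open_deriv:
  assumes "smooth_on S f" "open S" "x \<in> S"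
  shows "(((deriv ^^ n) f) has_real_derivative ((deriv ^^ (Suc n)) f x)) (at x)"
  using assms unfolding smooth_on_def by (metis at_within_open)

section \<open>Step 1: decay of H^1_2 functions at the origin\<close>

lemma increment_le_weighted_energy:
  fixes f g :: "real \<Rightarrow> real"
  assumes xz: "0 < x" "x \<le> z" and I: "0 \<le> I"
    and df: "\<And>y. x \<le> y \<Longrightarrow> y \<le> z \<Longrightarrow> (f has_real_derivative deriv f y) (at y)"
    and g_int: "g integrable_on {x..z}" and g_le: "integral {x..z} g \<le> I"
    and g_ge: "\<And>y. x \<le> y \<Longrightarrow> y \<le> z \<Longrightarrow> (deriv f y)\<^sup>2 / y\<^sup>2 \<le> g y"
  shows "\<bar>f z - f x\<bar> \<le> (I+1)/2 * z * sqrt z"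
proof -
  define t where "t = 1/(z * sqrt z)"
  have z0: "z > 0" using xz by auto
  have t0: "t > 0" unfolding t_def using z0 by auto
  have ftc: "(deriv f has_integral f z - f x) {x..z}"
    using xz df
    by (intro fundamental_theorem_of_calculus)
       (auto simp: has_real_derivative_iff_has_vector_derivative[symmetric] intro: has_field_derivative_at_within)
  define h where "h = (\<lambda>y. g y / (2*t) + t*z\<^sup>2/2)"
  have h_int: "(h has_integral (integral {x..z} g / (2*t) + (z-x)*(t*z\<^sup>2/2))) {x..z}"
    unfolding h_def using has_integral_const_real[of "t*z\<^sup>2/2" x z] xz
    by (intro has_integral_add has_integral_divide integrable_integral[OF g_int]) simp
  have "norm (integral {x..z} (deriv f)) \<le> integral {x..z} h"
  proof (rule integral_norm_bound_integral)
    show "deriv f integrable_on {x..z}" using ftc by blast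
    show "h integrable_on {x..z}" using h_int by blast
    fix y assume y: "y \<in> {x..z}"
    hence y0: "y > 0" using xz by auto
    have "\<bar>deriv f y\<bar> \<le> ((deriv f y)\<^sup>2/y\<^sup>2)/(2*t) + t*y\<^sup>2/2"
      by (rule abs_le_weighted_amgm[OF y0 t0])
    also have "\<dots> \<le> g y/(2*t) + t*z\<^sup>2/2"
      using g_ge[of y] y y0 t0 by (intro add_mono divide_right_mono mult_left_mono power_mono) auto
    finally show "norm (deriv f y) \<le> h y" unfolding h_def by simp
  qed
  hence "\<bar>f z - f x\<bar> \<le> integral {x..z} g / (2*t) + (z-x)*(t*z\<^sup>2/2)"
    using ftc h_int by (simp add: integral_unique)
  also have "\<dots> \<le> I/(2*t) + z*(t*z\<^sup>2/2)"
    using g_le xz t0 z0 by (intro add_mono divide_right_mono mult_right_mono) auto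
  also have "\<dots> = (I+1)/2 * z * sqrt z"
  proof -
    have s: "sqrt z * sqrt z = z" using z0 by simp
    have "sqrt z > 0" using z0 by simp
    thus ?thesis unfolding t_def using z0 s
      by (simp add: field_simps power2_eq_square) (simp add: mult.assoc[symmetric] s)
  qed
  finally show ?thesis .
qed

text \<open>If f^2/y^2 has bounded integrals over all [x,z] with x > 0, then f takes arbitrarily
  small values in every interval (0,z]: otherwise the integral of e^2/y^2 would diverge.\<close>
lemma small_values_of_weighted_square_integrable:
  fixes f g :: "real \<Rightarrow> real"
  assumes z: "0 < z" and e: "0 < e" and I: "0 \<le> I"
    and g_int: "\<And>x. 0 < x \<Longrightarrow> x \<le> z \<Longrightarrow> g integrable_on {x..z}"
    and g_le: "\<And>x. 0 < x \<Longrightarrow> x \<le> z \<Longrightarrow> integral {x..z} g \<le> I"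
    and g_ge: "\<And>y. 0 < y \<Longrightarrow> y \<le> z \<Longrightarrow> (f y)\<^sup>2 / y\<^sup>2 \<le> g y"
  shows "\<exists>x. 0 < x \<and> x \<le> z \<and> \<bar>f x\<bar> \<le> e"
proof (rule ccontr)
  assume "\<not> ?thesis"
  hence big: "\<And>x. 0 < x \<Longrightarrow> x \<le> z \<Longrightarrow> e < \<bar>f x\<bar>" by force
  define x0 where "x0 = 1/(I/e\<^sup>2 + 2/z)"
  have den: "I/e\<^sup>2 + 2/z > 0" using I e z by (auto intro: add_nonneg_pos)
  have x00: "x0 > 0" unfolding x0_def using den by simp
  have "x0 \<le> z/2"
  proof -
    have "2/z \<le> I/e\<^sup>2 + 2/z" using I e by simp
    moreover have "0 < (I/e\<^sup>2 + 2/z)*(2/z)" using den z by (intro mult_pos_pos) auto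
    ultimately have "1/(I/e\<^sup>2 + 2/z) \<le> 1/(2/z)" using z by (intro divide_left_mono) auto
    thus ?thesis unfolding x0_def by simp
  qed
  hence x0z: "x0 < z" using z by simp
  have ftc: "((\<lambda>y. e\<^sup>2/y\<^sup>2) has_integral (e\<^sup>2/x0 - e\<^sup>2/z)) {x0..z}"
  proof -
    have "((\<lambda>y. e\<^sup>2/y\<^sup>2) has_integral ((-e\<^sup>2/z) - (-e\<^sup>2/x0))) {x0..z}"
    proof (rule fundamental_theorem_of_calculus)
      show "x0 \<le> z" using x0z by simp
      fix y assume "y \<in> {x0..z}"
      hence y0: "y > 0" using x00 by auto
      show "((\<lambda>y. -e\<^sup>2/y) has_vector_derivative e\<^sup>2/y\<^sup>2) (at y within {x0..z})"
        unfolding has_real_derivative_iff_has_vector_derivative[symmetric]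
        using y0 by (auto intro!: derivative_eq_intros simp: power2_eq_square field_simps)
    qed
    thus ?thesis by simp
  qed
  have "e\<^sup>2/x0 - e\<^sup>2/z \<le> integral {x0..z} g"
  proof (rule has_integral_le[OF ftc integrable_integral[OF g_int[OF x00 less_imp_le[OF x0z]]]])
    fix y assume y: "y \<in> {x0..z}"
    hence y0: "y > 0" using x00 by auto
    have "e < \<bar>f y\<bar>" using big y y0 by auto
    hence "e\<^sup>2 \<le> (f y)\<^sup>2" using e by (metis abs_ge_zero less_imp_le power2_abs power_mono)
    hence "e\<^sup>2/y\<^sup>2 \<le> (f y)\<^sup>2/y\<^sup>2" by (simp add: divide_right_mono)
    also have "\<dots> \<le> g y" using g_ge y y0 by auto
    finally show "e\<^sup>2/y\<^sup>2 \<le> g y" .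
  qed
  also have "\<dots> \<le> I" using g_le x00 x0z by simp
  finally have "e\<^sup>2/x0 - e\<^sup>2/z \<le> I" .
  moreover have "e\<^sup>2/x0 = I + 2*e\<^sup>2/z" unfolding x0_def using e by (simp add: field_simps)
  moreover have "e\<^sup>2/z > 0" using e z by simp
  ultimately show False by linarith
qed

lemma finite_H12_energy_decay:
  fixes f :: "real \<Rightarrow> real"
  assumes df: "\<And>y. 0 < y \<Longrightarrow> y < R \<Longrightarrow> (f has_real_derivative deriv f y) (at y)"
    and cont: "continuous_on {0<..<R} (deriv f)"
    and energy: "(\<lambda>y. ((deriv f y)\<^sup>2 + (f y)\<^sup>2) / y\<^sup>2) integrable_on {0<..<R}"
  shows "\<exists>B>0. \<forall>z. 0 < z \<longrightarrow> z < R \<longrightarrow> \<bar>f z\<bar> \<le> B * z * sqrt z"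
proof -
  define g where "g = (\<lambda>y. ((deriv f y)\<^sup>2 + (f y)\<^sup>2) / y\<^sup>2)"
  define I where "I = integral {0<..<R} g"
  have g_nonneg: "\<forall>y\<in>{0<..<R}. 0 \<le> g y" unfolding g_def by auto
  have I0: "I \<ge> 0" unfolding I_def using energy g_nonneg g_def by (intro integral_nonneg) auto
  have cont_f: "continuous_on {0<..<R} f"
    using df by (intro DERIV_continuous_on[where D="deriv f"]) (auto intro: has_field_derivative_at_within)
  have g_int: "g integrable_on {x..z}" if "0 < x" "z < R" for x z
  proof -
    have sub: "{x..z} \<subseteq> {0<..<R}" using that by auto
    have "continuous_on {x..z} g" unfolding g_def using sub that
      by (intro continuous_intros continuous_on_subset[OF cont] continuous_on_subset[OF cont_f]) auto
    thus ?thesis by (rule integrable_continuous_real)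
  qed
  have g_le: "integral {x..z} g \<le> I" if "0 < x" "z < R" for x z
    unfolding I_def using that g_nonneg energy g_def by (intro integral_subset_le g_int) auto
  have g_ge_f: "(f y)\<^sup>2 / y\<^sup>2 \<le> g y" and g_ge_df: "(deriv f y)\<^sup>2 / y\<^sup>2 \<le> g y" for y
    unfolding g_def by (simp_all add: divide_right_mono)
  have "\<bar>f z\<bar> \<le> (I+1)/2 * z * sqrt z" if z: "0 < z" "z < R" for z
  proof (rule abs_le_of_small_values[of f z])
    fix e :: real assume e: "e > 0"
    obtain x where x: "0 < x" "x \<le> z" "\<bar>f x\<bar> \<le> e"
      using small_values_of_weighted_square_integrable[OF z(1) e I0, of g f] g_int g_le g_ge_f z
      by fastforce
    have "\<bar>f z - f x\<bar> \<le> (I+1)/2 * z * sqrt z"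
    proof (rule increment_le_weighted_energy[OF x(1,2) I0])
      show "g integrable_on {x..z}" "integral {x..z} g \<le> I" using g_int g_le x z by auto
      show "(f has_real_derivative deriv f y) (at y)" if "x \<le> y" "y \<le> z" for y
        using df that x z by auto
    qed (rule g_ge_df)
    with x(3) show "\<exists>x. \<bar>f x\<bar> \<le> e \<and> \<bar>f z - f x\<bar> \<le> (I+1)/2 * z * sqrt z" by blast
  qed
  moreover have "(I+1)/2 > 0" using I0 by simp
  ultimately show ?thesis by blast
qed

lemma smooth_H12_decay:
  fixes \<phi> :: "real \<Rightarrow> real"
  assumes "in_H12 R \<phi>" and smooth: "smooth_on {0<..<R} \<phi>"
  shows "\<exists>B>0. \<forall>z. 0 < z \<longrightarrow> z < R \<longrightarrow> \<bar>\<phi> z\<bar> \<le> B * z * sqrt z"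
proof (rule finite_H12_energy_decay)
  show "(\<phi> has_real_derivative deriv \<phi> y) (at y)" if "0 < y" "y < R" for y
    using smooth_on_open_deriv[OF smooth, of y 0] that by simp
  have "(deriv \<phi> has_real_derivative deriv (deriv \<phi>) y) (at y)" if "0 < y" "y < R" for y
    using smooth_on_open_deriv[OF smooth, of y 1] that by simp
  then show "continuous_on {0<..<R} (deriv \<phi>)"
    by (intro DERIV_continuous_on[where D="deriv (deriv \<phi>)"]) (auto intro: has_field_derivative_at_within)
  show "(\<lambda>y. ((deriv \<phi> y)\<^sup>2 + (\<phi> y)\<^sup>2) / y\<^sup>2) integrable_on {0<..<R}"
    using assms(1) unfolding in_H12_def by (auto intro: set_borel_integral_eq_integral(1))
qed

section \<open>Steps 2 and 3: bootstrap for a flux equation\<close>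

text \<open>A function whose derivative is O(y^(-1/2)) on (0,eta] is bounded there, because
  y^(-1/2) is integrable at 0 (with primitive 2 sqrt y).\<close>
lemma bounded_of_deriv_le_inv_sqrt:
  fixes w :: "real \<Rightarrow> real"
  assumes z: "0 < z" "z \<le> \<eta>" and E: "0 \<le> E"
    and dw: "\<And>y. 0 < y \<Longrightarrow> y \<le> \<eta> \<Longrightarrow> (w has_real_derivative deriv w y) (at y)"
    and dw_le: "\<And>y. 0 < y \<Longrightarrow> y \<le> \<eta> \<Longrightarrow> \<bar>deriv w y\<bar> \<le> E / sqrt y"
  shows "\<bar>w z\<bar> \<le> \<bar>w \<eta>\<bar> + 2 * E * sqrt \<eta>"
proof -
  have "\<bar>w \<eta> - w z\<bar> \<le> 2 * E * sqrt \<eta> - 2 * E * sqrt z"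
  proof (rule abs_increment_le_majorant[OF z(2)])
    fix y assume y: "z \<le> y" "y \<le> \<eta>"
    hence y0: "0 < y" using z by auto
    show "(w has_real_derivative deriv w y) (at y)" using dw y0 y by auto
    show "((\<lambda>y. 2 * E * sqrt y) has_real_derivative E / sqrt y) (at y)"
      using y0 by (auto intro!: derivative_eq_intros simp: field_simps)
    show "\<bar>deriv w y\<bar> \<le> E / sqrt y" using dw_le y0 y by auto
  qed
  moreover have "2 * E * sqrt z \<ge> 0" using E z by simp
  ultimately show ?thesis by linarith
qed

lemma cubic_decay_of_flux_equation:
  fixes \<phi> w A :: "real \<Rightarrow> real"
  assumes \<eta>: "0 < \<eta>" and c0: "0 < c0" and B: "0 \<le> B" and D: "0 \<le> D"
    and d\<phi>: "\<And>y. 0 < y \<Longrightarrow> y \<le> \<eta> \<Longrightarrow> (\<phi> has_real_derivative deriv \<phi> y) (at y)"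
    and dw: "\<And>y. 0 < y \<Longrightarrow> y \<le> \<eta> \<Longrightarrow> (w has_real_derivative deriv w y) (at y)"
    and flux: "\<And>y. 0 < y \<Longrightarrow> y \<le> \<eta> \<Longrightarrow> w y = A y * deriv \<phi> y / y\<^sup>2"
    and A_ge: "\<And>y. 0 < y \<Longrightarrow> y \<le> \<eta> \<Longrightarrow> c0 \<le> A y"
    and \<phi>_decay: "\<And>y. 0 < y \<Longrightarrow> y \<le> \<eta> \<Longrightarrow> \<bar>\<phi> y\<bar> \<le> B * y * sqrt y"
    and dw_le: "\<And>y. 0 < y \<Longrightarrow> y \<le> \<eta> \<Longrightarrow> \<bar>deriv w y\<bar> \<le> D / y\<^sup>2 * \<bar>\<phi> y\<bar>"
  shows "\<exists>C>0. \<forall>z. 0 < z \<and> z \<le> \<eta> \<longrightarrow> \<bar>\<phi> z\<bar> \<le> C * z ^ 3 \<and> \<bar>deriv \<phi> z\<bar> \<le> C * z\<^sup>2"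
proof -
  define W where "W = \<bar>w \<eta>\<bar> + 2 * (D * B) * sqrt \<eta>"
  have W0: "0 \<le> W" unfolding W_def using B D \<eta> by simp
  have dw_sqrt: "\<bar>deriv w y\<bar> \<le> D * B / sqrt y" if y: "0 < y" "y \<le> \<eta>" for y
  proof -
    have "\<bar>deriv w y\<bar> \<le> D / y\<^sup>2 * (B * y * sqrt y)"
      using dw_le[OF y] \<phi>_decay[OF y] D y by (smt (verit) divide_nonneg_nonneg mult_left_mono zero_le_power2)
    also have "\<dots> = D * B / sqrt y"
    proof -
      have "sqrt y * sqrt y = y" "sqrt y > 0" using y by simp_all
      thus ?thesis using y by (simp add: field_simps power2_eq_square)
    qed
    finally show ?thesis .
  qed
  have w_bounded: "\<bar>w z\<bar> \<le> W" if "0 < z" "z \<le> \<eta>" for z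
    unfolding W_def using that B D dw dw_sqrt by (intro bounded_of_deriv_le_inv_sqrt) auto
  define C where "C = W / c0 + 1"
  have C0: "C > 0" unfolding C_def using W0 c0 by (simp add: add_nonneg_pos)
  have d\<phi>_bound: "\<bar>deriv \<phi> z\<bar> \<le> C * z\<^sup>2" if z: "0 < z" "z \<le> \<eta>" for z
  proof -
    have Az: "A z > 0" using A_ge[OF z] c0 by linarith
    have "deriv \<phi> z = w z * z\<^sup>2 / A z" using flux[OF z] Az z by (simp add: field_simps)
    hence "\<bar>deriv \<phi> z\<bar> = \<bar>w z\<bar> * z\<^sup>2 / A z" using Az by (simp add: abs_mult)
    also have "\<dots> \<le> W * z\<^sup>2 / c0"
      using w_bounded[OF z] Az A_ge[OF z] c0 W0 by (intro frac_le mult_right_mono) auto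
    also have "\<dots> \<le> C * z\<^sup>2" unfolding C_def by (simp add: field_simps)
    finally show ?thesis .
  qed
  have \<phi>_bound: "\<bar>\<phi> z\<bar> \<le> C * z ^ 3" if z: "0 < z" "z \<le> \<eta>" for z
  proof (rule abs_le_of_small_values[of \<phi> z])
    fix e :: real assume e: "e > 0"
    define x where "x = min z (min 1 (e/(B+1)))"
    have x: "0 < x" "x \<le> z" "x \<le> 1" "x \<le> e/(B+1)" unfolding x_def using z e B by auto
    have "\<bar>\<phi> z - \<phi> x\<bar> \<le> C*z\<^sup>2*z - C*z\<^sup>2*x"
    proof (rule abs_increment_le_majorant[OF x(2)])
      fix y assume y: "x \<le> y" "y \<le> z"
      hence y0: "0 < y" "y \<le> \<eta>" using z x by auto
      show "(\<phi> has_real_derivative deriv \<phi> y) (at y)" by (rule d\<phi>[OF y0])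
      show "((\<lambda>y. C*z\<^sup>2*y) has_real_derivative C*z\<^sup>2) (at y)"
        by (auto intro!: derivative_eq_intros)
      have "C*y\<^sup>2 \<le> C*z\<^sup>2" using C0 y y0 by (auto intro!: mult_left_mono power_mono)
      thus "\<bar>deriv \<phi> y\<bar> \<le> C*z\<^sup>2" using d\<phi>_bound[OF y0] by linarith
    qed
    moreover have "C*z\<^sup>2*x \<ge> 0" using C0 x by simp
    ultimately have "\<bar>\<phi> z - \<phi> x\<bar> \<le> C * z ^ 3" by (simp add: power2_eq_square power3_eq_cube)
    moreover have "\<bar>\<phi> x\<bar> \<le> e"
    proof -
      have "\<bar>\<phi> x\<bar> \<le> B*x* sqrt x" using \<phi>_decay x z by auto
      also have "\<dots> \<le> B*x" using B x by (simp add: mult_left_le real_sqrt_le_1_iff)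
      also have "\<dots> \<le> B*(e/(B+1))" using B x by (intro mult_left_mono) auto
      also have "\<dots> \<le> e" using B e by (simp add: field_simps)
      finally show ?thesis .
    qed
    ultimately show "\<exists>x. \<bar>\<phi> x\<bar> \<le> e \<and> \<bar>\<phi> z - \<phi> x\<bar> \<le> C * z ^ 3" by blast
  qed
  show ?thesis using C0 \<phi>_bound d\<phi>_bound by blast
qed

section \<open>The Lane-Emden coefficient\<close>

lemma pressure_gradient_bound:
  fixes \<rho> :: "real \<Rightarrow> real"
  assumes z: "0 < z" and cont: "continuous_on {0..z} \<rho>"
    and bound: "\<And>y. 0 \<le> y \<Longrightarrow> y \<le> z \<Longrightarrow> 0 \<le> \<rho> y \<and> \<rho> y \<le> M"
  shows "\<bar>4 * pi * \<rho> z / z\<^sup>2 * integral {0..z} (\<lambda>y. \<rho> y * y\<^sup>2)\<bar> \<le> 4 * pi * M\<^sup>2 * z"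
proof -
  define J where "J = integral {0..z} (\<lambda>y. \<rho> y * y\<^sup>2)"
  have int: "(\<lambda>y. \<rho> y * y\<^sup>2) integrable_on {0..z}"
    by (intro integrable_continuous_real continuous_intros cont)
  have J0: "0 \<le> J" unfolding J_def using bound by (intro integral_nonneg int) auto
  have "J \<le> integral {0..z} (\<lambda>y. M * z\<^sup>2)" unfolding J_def
  proof (rule integral_le[OF int integrable_const_ivl])
    fix y assume y: "y \<in> {0..z}"
    hence "0 \<le> \<rho> y" "\<rho> y \<le> M" "y\<^sup>2 \<le> z\<^sup>2" using bound by (auto intro: power_mono)
    thus "\<rho> y * y\<^sup>2 \<le> M * z\<^sup>2" by (intro mult_mono) auto
  qed
  also have "\<dots> = M * z ^ 3" using z by (simp add: power2_eq_square power3_eq_cube)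
  finally have JM: "J \<le> M * z ^ 3" .
  have r: "0 \<le> \<rho> z" "\<rho> z \<le> M" using bound z by auto
  have "\<bar>4 * pi * \<rho> z / z\<^sup>2 * J\<bar> = 4 * pi * \<rho> z / z\<^sup>2 * J" using r J0 by simp
  also have "\<dots> \<le> 4 * pi * M / z\<^sup>2 * (M * z ^ 3)"
    using r J0 JM z by (intro mult_mono divide_right_mono) auto
  also have "\<dots> = 4 * pi * M\<^sup>2 * z" using z by (simp add: power2_eq_square power3_eq_cube)
  finally show ?thesis unfolding J_def .
qed

lemma lane_emden_coefficient_bound:
  fixes K \<gamma> R \<mu> :: real and \<rho>0 :: "real \<Rightarrow> real"
  defines "P \<equiv> (\<lambda>y. K * \<rho>0 y powr \<gamma>)"
  assumes "lane_emden K \<gamma> R \<rho>0"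
  obtains \<eta> D where "0 < \<eta>" "\<eta> < R" "0 \<le> D"
    and "\<And>z. 0 < z \<Longrightarrow> z \<le> \<eta> \<Longrightarrow> (P has_real_derivative deriv P z) (at z)"
    and "\<And>z. 0 < z \<Longrightarrow> z \<le> \<eta> \<Longrightarrow> \<bar>4 * deriv P z / z ^ 3 - \<mu> * \<rho>0 z / z\<^sup>2\<bar> \<le> D / z\<^sup>2"
proof -
  from assms(2) have R0: "R > 0" and sm: "smooth_on {0..<R} \<rho>0"
    and pos: "\<forall>z\<in>{0..<R}. \<rho>0 z > 0"
    and dP0: "\<forall>z\<in>{0<..<R}. (P has_real_derivative
         (- 4 * pi * \<rho>0 z / z\<^sup>2 * integral {0..z} (\<lambda>y. \<rho>0 y * y\<^sup>2))) (at z)"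
    unfolding lane_emden_def P_def by auto
  have cont: "continuous_on {0..<R} \<rho>0"
  proof (rule DERIV_continuous_on[where D="deriv \<rho>0"])
    fix x assume "x \<in> {0..<R}"
    thus "(\<rho>0 has_real_derivative deriv \<rho>0 x) (at x within {0..<R})"
      using sm unfolding smooth_on_def by (metis funpow_0 funpow_Suc_right o_apply One_nat_def)
  qed
  define \<eta> where "\<eta> = R / 2"
  have \<eta>: "0 < \<eta>" "\<eta> < R" unfolding \<eta>_def using R0 by auto
  have cont\<eta>: "continuous_on {0..\<eta>} \<rho>0" by (rule continuous_on_subset[OF cont]) (use \<eta> in auto)
  obtain a where a: "\<And>y. y \<in> {0..\<eta>} \<Longrightarrow> \<bar>\<rho>0 y\<bar> \<le> a"
    using compact_imp_bounded[OF compact_continuous_image[OF cont\<eta> compact_Icc]]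
    unfolding bounded_real by blast
  define M where "M = max a 1"
  have \<rho>_bound: "0 \<le> \<rho>0 y \<and> \<rho>0 y \<le> M" if "0 \<le> y" "y \<le> \<eta>" for y
  proof -
    have "\<bar>\<rho>0 y\<bar> \<le> a" "0 < \<rho>0 y" using a[of y] pos \<eta> that by auto
    thus ?thesis unfolding M_def by linarith
  qed
  define D where "D = 16 * pi * M\<^sup>2 + \<bar>\<mu>\<bar> * M"
  have D0: "0 \<le> D" unfolding D_def M_def by simp
  have dP: "(P has_real_derivative deriv P z) (at z)"
    and dP_eq: "deriv P z = - (4 * pi * \<rho>0 z / z\<^sup>2 * integral {0..z} (\<lambda>y. \<rho>0 y * y\<^sup>2))"
    if "0 < z" "z \<le> \<eta>" for z
  proof -
    have "(P has_real_derivative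
        - 4 * pi * \<rho>0 z / z\<^sup>2 * integral {0..z} (\<lambda>y. \<rho>0 y * y\<^sup>2)) (at z)"
      using dP0 that \<eta> by auto
    with DERIV_imp_deriv show "(P has_real_derivative deriv P z) (at z)"
      and "deriv P z = - (4 * pi * \<rho>0 z / z\<^sup>2 * integral {0..z} (\<lambda>y. \<rho>0 y * y\<^sup>2))"
      by fastforce+
  qed
  have "\<bar>4 * deriv P z / z ^ 3 - \<mu> * \<rho>0 z / z\<^sup>2\<bar> \<le> D / z\<^sup>2" if z: "0 < z" "z \<le> \<eta>" for z
  proof -
    have dP_le: "\<bar>deriv P z\<bar> \<le> 4 * pi * M\<^sup>2 * z"
      unfolding dP_eq[OF z] abs_minus_cancel using z \<rho>_bound
      by (intro pressure_gradient_bound continuous_on_subset[OF cont\<eta>]) auto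
    have "\<bar>4 * deriv P z / z ^ 3 - \<mu> * \<rho>0 z / z\<^sup>2\<bar> \<le> \<bar>4 * deriv P z / z ^ 3\<bar> + \<bar>\<mu> * \<rho>0 z / z\<^sup>2\<bar>"
      by (rule abs_triangle_ineq4)
    also have "\<dots> \<le> 4 * \<bar>deriv P z\<bar> / z ^ 3 + \<bar>\<mu>\<bar> * M / z\<^sup>2"
      using z \<rho>_bound[of z] by (simp add: abs_mult divide_right_mono mult_left_mono)
    also have "\<dots> \<le> 4 * (4 * pi * M\<^sup>2 * z) / z ^ 3 + \<bar>\<mu>\<bar> * M / z\<^sup>2"
      using dP_le z by (intro add_mono divide_right_mono mult_left_mono) auto
    also have "\<dots> = D / z\<^sup>2" unfolding D_def using z
      by (simp add: field_simps power2_eq_square power3_eq_cube)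
    finally show ?thesis .
  qed
  with that \<eta> D0 dP show ?thesis by blast
qed

lemma flux_has_deriv:
  fixes P D :: "real \<Rightarrow> real"
  assumes "(P has_real_derivative P') (at x)" "(D has_real_derivative D') (at x)" "x \<noteq> 0"
  shows "((\<lambda>y. (c + g * P y) * D y / y\<^sup>2) has_real_derivative
           deriv (\<lambda>y. (c + g * P y) * D y / y\<^sup>2) x) (at x)"
proof -
  have "\<exists>d. ((\<lambda>y. (c + g * P y) * D y / y\<^sup>2) has_real_derivative d) (at x)"
    using DERIV_divide[OF DERIV_mult[OF DERIV_add[OF DERIV_const DERIV_cmult[OF assms(1)]] assms(2)]
        DERIV_pow[of 2 x]] assms(3) by auto
  thus ?thesis using DERIV_imp_deriv by metis
qed

theorem lemma2p6:
  fixes \<epsilon> \<delta> K \<gamma> R s \<mu> :: real and \<rho>0 \<phi> :: "real \<Rightarrow> real"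
  assumes "\<epsilon> > 0" "\<delta> > 0" "K > 0" "6/5 < \<gamma>" "\<gamma> < 4/3"
    and "lane_emden K \<gamma> R \<rho>0"
    and "s > 0"
    and "in_H12 R \<phi>"
    and "smooth_on {0<..<R} \<phi>"
    and "\<forall>z\<in>{0<..<R}.
      - deriv (\<lambda>y. (4 * (s * \<epsilon>) / 3 + s * \<delta> + \<gamma> * (K * \<rho>0 y powr \<gamma>)) * deriv \<phi> y / y\<^sup>2) z
      + 4 * deriv (\<lambda>y. K * \<rho>0 y powr \<gamma>) z / z ^ 3 * \<phi> z
      = \<mu> * \<rho>0 z / z\<^sup>2 * \<phi> z"
  shows "\<exists>C>0. \<exists>\<eta>>0. \<forall>z. 0 < z \<and> z < \<eta> \<and> z < R \<longrightarrow>
           \<bar>\<phi> z\<bar> \<le> C * z ^ 3 \<and> \<bar>deriv \<phi> z\<bar> \<le> C * z\<^sup>2"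
proof -
  define P where "P = (\<lambda>y. K * \<rho>0 y powr \<gamma>)"
  define c0 where "c0 = 4 * (s * \<epsilon>) / 3 + s * \<delta>"
  define w where "w = (\<lambda>y. (c0 + \<gamma> * P y) * deriv \<phi> y / y\<^sup>2)"
  obtain \<eta> D where \<eta>: "0 < \<eta>" "\<eta> < R" and D: "0 \<le> D"
    and dP: "\<And>z. 0 < z \<Longrightarrow> z \<le> \<eta> \<Longrightarrow> (P has_real_derivative deriv P z) (at z)"
    and coeff: "\<And>z. 0 < z \<Longrightarrow> z \<le> \<eta> \<Longrightarrow> \<bar>4 * deriv P z / z ^ 3 - \<mu> * \<rho>0 z / z\<^sup>2\<bar> \<le> D / z\<^sup>2"
    using lane_emden_coefficient_bound[OF assms(6), of \<mu>] unfolding P_def by blast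
  have d\<phi>: "(\<phi> has_real_derivative deriv \<phi> y) (at y)"
    and dd\<phi>: "(deriv \<phi> has_real_derivative deriv (deriv \<phi>) y) (at y)" if "0 < y" "y < R" for y
    using smooth_on_open_deriv[OF assms(9), of y 0] smooth_on_open_deriv[OF assms(9), of y 1] that by auto
  obtain B where B: "0 < B"
    and \<phi>_decay: "\<And>z. 0 < z \<Longrightarrow> z < R \<Longrightarrow> \<bar>\<phi> z\<bar> \<le> B * z * sqrt z"
    using smooth_H12_decay[OF assms(8,9)] by blast
  have flux_eq: "deriv w z = (4 * deriv P z / z ^ 3 - \<mu> * \<rho>0 z / z\<^sup>2) * \<phi> z" if "0 < z" "z < R" for z
    using assms(10) that unfolding w_def P_def c0_def by (auto simp: algebra_simps)
  have "\<exists>C>0. \<forall>z. 0 < z \<and> z \<le> \<eta> \<longrightarrow> \<bar>\<phi> z\<bar> \<le> C * z ^ 3 \<and> \<bar>deriv \<phi> z\<bar> \<le> C * z\<^sup>2"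
  proof (rule cubic_decay_of_flux_equation[of \<eta> c0 B D \<phi> w "\<lambda>y. c0 + \<gamma> * P y"])
    show "0 < c0" unfolding c0_def using assms(1,2,7) by (intro add_pos_pos) auto
    show "c0 \<le> c0 + \<gamma> * P y" for y unfolding P_def using assms(3,4) by simp
    show "(w has_real_derivative deriv w y) (at y)" if "0 < y" "y \<le> \<eta>" for y
      unfolding w_def using flux_has_deriv[OF dP dd\<phi>] that \<eta> by simp
    show "\<bar>deriv w y\<bar> \<le> D / y\<^sup>2 * \<bar>\<phi> y\<bar>" if "0 < y" "y \<le> \<eta>" for y
      unfolding flux_eq[OF that(1) le_less_trans[OF that(2) \<eta>(2)]] abs_mult
      using coeff[OF that] by (rule mult_right_mono) simp
  qed (use \<eta> B D d\<phi> \<phi>_decay in \<open>auto simp: w_def\<close>)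
  then obtain C where "C > 0" "\<And>z. 0 < z \<Longrightarrow> z \<le> \<eta> \<Longrightarrow> \<bar>\<phi> z\<bar> \<le> C * z ^ 3 \<and> \<bar>deriv \<phi> z\<bar> \<le> C * z\<^sup>2"
    by blast
  with \<eta> show ?thesis by (intro exI[of _ C] conjI exI[of _ \<eta>]) auto
qed

end
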